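(* Let $P,Q$ be probability measures, $X\sim P$, and suppose $\mathbb{P}[\imath_{P\|Q}(X)=x]=0$ for every $x\in\mathbb{R}$. Then: (a) $\gamma\mapsto E_\gamma(P\|Q)$ is continuously differentiable on $(1,\infty)$ with derivative $E'_\gamma(P\|Q)\le 0$; (b) for all $\gamma>1$, $$\mathbb{F}_{P\|Q}(\log\gamma) = 1-E_\gamma(P\|Q)+\gamma E'_\gamma(P\|Q),\qquad \mathbb{F}_{P\|Q}(-\log\gamma) = -E'_\gamma(Q\|P),$$ and $\mathbb{F}_{P\|Q}(0) = 1-E_1(P\|Q)+\lim_{\gamma\downarrow1}E'_\gamma(P\|Q) = -\lim_{\gamma\downarrow1}E'_\gamma(Q\|P)$; (c) consequently, the family $\{E_\gamma(P\|Q):\gamma\ge1\}$ determines $\mathbb{F}_{P\|Q}$ on $[0,\infty)$, and the family $\{E_\gamma(Q\|P):\gamma>1\}$ determines $\mathbb{F}_{P\|Q}$ on $(-\infty,0)$.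
   Context: $\log$ is to a fixed base $b>1$. For densities $p,q$ of $P,Q$ w.r.t. a dominating measure $\mu$, $\imath_{P\|Q}:=\log p-\log q$ (in $[-\infty,\infty]$), $\mathbb{F}_{P\|Q}(x):=\mathbb{P}[\imath_{P\|Q}(X)\le x]$ with $X\sim P$. For $\gamma\ge1$, $E_\gamma(P\|Q):=\sup_U\bigl(P(U)-\gamma Q(U)\bigr)=\int(p-\gamma q)^+\,\mathrm{d}\mu$. *)

theory Defs
  imports "HOL-Analysis.Analysis"
begin

definition is_prob_density :: "'a measure \<Rightarrow> ('a \<Rightarrow> real) \<Rightarrow> bool" where
  "is_prob_density M p \<longleftrightarrow> p \<in> borel_measurable M \<and> (\<forall>x\<in>space M. 0 \<le> p x)
     \<and> integrable M p \<and> integral\<^sup>L M p = 1"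

definition dens_meas :: "'a measure \<Rightarrow> ('a \<Rightarrow> real) \<Rightarrow> 'a measure" where
  "dens_meas M p = density M (\<lambda>x. ennreal (p x))"

text \<open>Information density log p - log q in the extended reals (log to base b, log 0 = -infinity).
  The value where p = q = 0 is immaterial (null set under both measures); we set it to 0.\<close>
definition info_dens :: "real \<Rightarrow> ('a \<Rightarrow> real) \<Rightarrow> ('a \<Rightarrow> real) \<Rightarrow> 'a \<Rightarrow> ereal" where
  "info_dens b p q x =
     (if 0 < p x \<and> 0 < q x then ereal (log b (p x) - log b (q x))
      else if 0 < p x then \<infinity>
      else if 0 < q x then -\<infinity>
      else 0)"

definition info_cdf :: "real \<Rightarrow> 'a measure \<Rightarrow> ('a \<Rightarrow> real) \<Rightarrow> ('a \<Rightarrow> real) \<Rightarrow> real \<Rightarrow> real" where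
  "info_cdf b M p q t = measure (dens_meas M p) {x \<in> space M. info_dens b p q x \<le> ereal t}"

definition E_gamma :: "'a measure \<Rightarrow> ('a \<Rightarrow> real) \<Rightarrow> ('a \<Rightarrow> real) \<Rightarrow> real \<Rightarrow> real" where
  "E_gamma M p q \<gamma> = (\<integral>x. max 0 (p x - \<gamma> * q x) \<partial>M)"

definition no_real_atoms :: "real \<Rightarrow> 'a measure \<Rightarrow> ('a \<Rightarrow> real) \<Rightarrow> ('a \<Rightarrow> real) \<Rightarrow> bool" where
  "no_real_atoms b M p q \<longleftrightarrow>
     (\<forall>t::real. measure (dens_meas M p) {x \<in> space M. info_dens b p q x = ereal t} = 0)"

end

theory Submission
  imports Defs
begin

text \<open>Differentiating \<open>E\<^sub>\<gamma> = \<integral>(p - \<gamma> q)\<^sup>+\<close> under the integral sign (dominated convergence;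
  the difference quotients are bounded by \<open>q\<close>) gives \<open>E'\<^sub>\<gamma> = -Q[p > \<gamma> q]\<close> as soon as
  \<open>{p = \<gamma> q}\<close> carries no \<open>Q\<close>-mass, and this is what the absence of an atom of the
  information density at \<open>log \<gamma>\<close> provides. Splitting \<open>P\<close> along \<open>{p \<le> \<gamma> q}\<close> and using
  \<open>P[p > \<gamma> q] = E\<^sub>\<gamma> + \<gamma> Q[p > \<gamma> q]\<close> yields \<open>\<bbbF>(log \<gamma>) = 1 - E\<^sub>\<gamma> + \<gamma> E'\<^sub>\<gamma>\<close>; with the
  roles of \<open>p\<close> and \<open>q\<close> exchanged, \<open>\<bbbF>(-log \<gamma>) = P[\<gamma> p < q] = -E'\<^sub>\<gamma>(Q\<parallel>P)\<close>. A function
  determines its derivative, and the right-continuity of \<open>\<gamma> \<mapsto> Q[p > \<gamma> q]\<close> extends this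
  to \<open>\<gamma> = 1\<close>, so the \<open>E\<^sub>\<gamma>\<close> determine \<open>\<bbbF>\<close>.\<close>

lemma integral_dominated_convergence_at_within:
  fixes s :: "real \<Rightarrow> 'a \<Rightarrow> 'b::{banach, second_countable_topology}"
  assumes "\<And>t. s t \<in> borel_measurable M" "f \<in> borel_measurable M" "integrable M w"
    and lim: "AE x in M. ((\<lambda>t. s t x) \<longlongrightarrow> f x) (at a within S)"
    and bound: "\<And>t. t \<in> S \<Longrightarrow> t \<noteq> a \<Longrightarrow> AE x in M. norm (s t x) \<le> w x"
  shows "((\<lambda>t. integral\<^sup>L M (s t)) \<longlongrightarrow> integral\<^sup>L M f) (at a within S)"
proof (rule tendsto_at_iff_sequentially[THEN iffD2], intro allI impI)
  fix X :: "nat \<Rightarrow> real" assume X: "\<forall>i. X i \<in> S - {a}" "X \<longlonglongrightarrow> a"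
  then have X_at: "filterlim X (at a within S) sequentially"
    by (auto simp: filterlim_at intro!: always_eventually)
  show "((\<lambda>t. integral\<^sup>L M (s t)) \<circ> X) \<longlonglongrightarrow> integral\<^sup>L M f"
    unfolding comp_def
  proof (rule integral_dominated_convergence[where w=w])
    show "AE x in M. (\<lambda>i. s (X i) x) \<longlonglongrightarrow> f x"
      using lim by eventually_elim (rule filterlim_compose[OF _ X_at])
    show "AE x in M. norm (s (X i) x) \<le> w x" for i
      using X bound by auto
  qed (use assms in auto)
qed

lemma integrable_if_zero:
  fixes f :: "'a \<Rightarrow> 'b::{banach, second_countable_topology}"
  assumes "integrable M f" "(\<lambda>x. if C x then f x else 0) \<in> borel_measurable M"
  shows "integrable M (\<lambda>x. if C x then f x else 0)"
  using assms by (rule Bochner_Integration.integrable_bound) auto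

lemma DERIV_unique_on_open:
  assumes "(f has_real_derivative D) (at x)" "(g has_real_derivative D') (at x)"
    and "open S" "x \<in> S" "\<And>y. y \<in> S \<Longrightarrow> f y = g y"
  shows "D = D'"
proof -
  have "(g has_real_derivative D) (at x)"
    using assms by (intro has_field_derivative_transform_within_open[OF assms(1)]) auto
  then show ?thesis
    using assms(2) by (rule DERIV_unique)
qed

lemma right_continuous_eq:
  fixes f g :: "real \<Rightarrow> 'b::t2_space"
  assumes "(f \<longlongrightarrow> f a) (at_right a)" "(g \<longlongrightarrow> g a) (at_right a)"
    and "\<And>y. a < y \<Longrightarrow> f y = g y"
  shows "f a = g a"
proof -
  have "\<forall>\<^sub>F y in at_right a. g y = f y"
    using eventually_at_right_less[of a] by eventually_elim (use assms(3) in auto)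
  with assms(2) have "(f \<longlongrightarrow> g a) (at_right a)"
    by (rule Lim_transform_eventually)
  then show ?thesis
    using assms(1) by (rule tendsto_unique[OF trivial_limit_at_right_real, rotated])
qed

lemma eventually_at_mult_less_iff:
  fixes a c g :: real
  assumes "a = g * c \<Longrightarrow> c = 0"
  shows "\<forall>\<^sub>F y in at g. y * c < a \<longleftrightarrow> g * c < a"
proof (cases "a = g * c")
  case True
  then show ?thesis using assms by simp
next
  case False
  have lim: "((\<lambda>y. a - y * c) \<longlongrightarrow> a - g * c) (at g)"
    by (intro tendsto_intros)
  show ?thesis
  proof (cases "g * c < a")
    case True
    with lim have "\<forall>\<^sub>F y in at g. 0 < a - y * c" by (intro order_tendstoD) auto
    then show ?thesis by eventually_elim (use True in auto)
  next
    case lt: False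
    with False lim have "\<forall>\<^sub>F y in at g. a - y * c < 0" by (intro order_tendstoD) auto
    then show ?thesis by eventually_elim (use lt in auto)
  qed
qed

lemma eventually_at_right_mult_less_iff:
  fixes a c g :: real
  assumes "0 \<le> c"
  shows "\<forall>\<^sub>F y in at_right g. y * c < a \<longleftrightarrow> g * c < a"
proof (cases "a = g * c \<and> c \<noteq> 0")
  case True
  then have "\<forall>\<^sub>F y in at_right g. g < y" by (simp add: eventually_at_right_less)
  then show ?thesis by eventually_elim (use True assms in auto)
next
  case False
  then have "\<forall>\<^sub>F y in at g. y * c < a \<longleftrightarrow> g * c < a"
    by (intro eventually_at_mult_less_iff) auto
  then show ?thesis
    by (simp add: eventually_at_split)
qed

lemma tendsto_max_zero_diff_quotient:
  fixes a c g :: real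
  assumes "a = g * c \<Longrightarrow> c = 0"
  shows "((\<lambda>y. (max 0 (a - y * c) - max 0 (a - g * c)) / (y - g))
    \<longlongrightarrow> (if g * c < a then - c else 0)) (at g)"
proof (rule tendsto_eventually)
  have "\<forall>\<^sub>F y in at g. y * c < a \<longleftrightarrow> g * c < a"
    using assms by (rule eventually_at_mult_less_iff)
  with eventually_neq_at_within[of g g UNIV]
  show "\<forall>\<^sub>F y in at g. (max 0 (a - y * c) - max 0 (a - g * c)) / (y - g) = (if g * c < a then - c else 0)"
    by eventually_elim (auto simp: field_simps)
qed

lemma max_zero_diff_quotient_bound:
  fixes a c g y :: real
  assumes "0 \<le> c" "y \<noteq> g"
  shows "\<bar>(max 0 (a - y * c) - max 0 (a - g * c)) / (y - g)\<bar> \<le> c"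
proof -
  have "\<bar>max 0 (a - y * c) - max 0 (a - g * c)\<bar> \<le> \<bar>(a - y * c) - (a - g * c)\<bar>"
    by linarith
  also have "\<dots> = \<bar>y - g\<bar> * c"
    using assms by (simp add: abs_mult left_diff_distrib[symmetric] abs_minus_commute)
  finally show ?thesis
    using assms by (simp add: divide_le_eq mult.commute)
qed

lemma measure_dens_meas_eq_integral_if:
  assumes P: "is_prob_density M p" and A: "A \<in> sets M"
    and R: "\<And>x. x \<in> space M \<Longrightarrow> 0 < p x \<Longrightarrow> x \<in> A \<longleftrightarrow> R x"
  shows "measure (dens_meas M p) A = (\<integral>x. (if R x then p x else 0) \<partial>M)"
proof -
  have [measurable]: "p \<in> borel_measurable M" and p_nonneg: "\<And>x. x \<in> space M \<Longrightarrow> 0 \<le> p x"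
    using P by (auto simp: is_prob_density_def)
  have "measure (dens_meas M p) A = enn2real (\<integral>\<^sup>+ x. ennreal (p x) * indicator A x \<partial>M)"
    using A by (simp add: dens_meas_def measure_def emeasure_density)
  also have "(\<integral>\<^sup>+ x. ennreal (p x) * indicator A x \<partial>M) = (\<integral>\<^sup>+ x. ennreal (indicator A x * p x) \<partial>M)"
    by (intro nn_integral_cong) (simp add: indicator_def)
  also have "enn2real \<dots> = (\<integral>x. indicator A x * p x \<partial>M)"
    using A p_nonneg by (intro integral_eq_nn_integral[symmetric]) auto
  also have "\<dots> = (\<integral>x. (if R x then p x else 0) \<partial>M)"
  proof (rule Bochner_Integration.integral_cong[OF refl])
    fix x assume "x \<in> space M"
    with p_nonneg[of x] R[of x] show "indicator A x * p x = (if R x then p x else 0)"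
      by (cases "p x = 0") auto
  qed
  finally show ?thesis .
qed

lemma info_dens_le_log_iff:
  assumes "1 < b" "0 < \<gamma>" "0 < p x" "0 \<le> q x"
  shows "info_dens b p q x \<le> ereal (log b \<gamma>) \<longleftrightarrow> p x \<le> \<gamma> * q x"
proof (cases "q x = 0")
  case False
  with assms have "log b (p x) - log b (q x) = log b (p x / q x)" "0 < q x"
    by (simp_all add: log_divide)
  with assms show ?thesis
    by (simp add: info_dens_def pos_divide_le_eq)
qed (use assms in \<open>simp add: info_dens_def\<close>)

lemma info_dens_eq_log_iff:
  assumes "1 < b" "0 < \<gamma>" "0 < p x" "0 \<le> q x"
  shows "info_dens b p q x = ereal (log b \<gamma>) \<longleftrightarrow> p x = \<gamma> * q x"
proof (cases "q x = 0")
  case False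
  with assms have "log b (p x) - log b (q x) = log b (p x / q x)" "0 < q x"
    by (simp_all add: log_divide)
  with assms show ?thesis
    by (simp add: info_dens_def divide_eq_eq inj_on_eq_iff[OF log_inj])
qed (use assms in \<open>simp add: info_dens_def\<close>)

lemma info_dens_measurable [measurable]:
  assumes [measurable]: "p \<in> borel_measurable M" "q \<in> borel_measurable M"
  shows "info_dens b p q \<in> borel_measurable M"
  unfolding info_dens_def by measurable

lemma info_cdf_log_eq_integral:
  assumes b: "1 < b" and \<gamma>: "0 < \<gamma>" and P: "is_prob_density M p" and Q: "is_prob_density M q"
  shows "info_cdf b M p q (log b \<gamma>) = (\<integral>x. (if p x \<le> \<gamma> * q x then p x else 0) \<partial>M)"
proof -
  have [measurable]: "p \<in> borel_measurable M" "q \<in> borel_measurable M"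
    using P Q by (simp_all add: is_prob_density_def)
  show ?thesis
    unfolding info_cdf_def
  proof (rule measure_dens_meas_eq_integral_if[OF P])
    show "x \<in> {x \<in> space M. info_dens b p q x \<le> ereal (log b \<gamma>)} \<longleftrightarrow> p x \<le> \<gamma> * q x"
      if "x \<in> space M" "0 < p x" for x
      using that b \<gamma> Q by (simp add: info_dens_le_log_iff is_prob_density_def)
  qed measurable
qed

lemma measure_info_dens_eq_log:
  assumes b: "1 < b" and \<gamma>: "0 < \<gamma>" and P: "is_prob_density M p" and Q: "is_prob_density M q"
  shows "measure (dens_meas M p) {x \<in> space M. info_dens b p q x = ereal (log b \<gamma>)}
    = (\<integral>x. (if p x = \<gamma> * q x then p x else 0) \<partial>M)"
proof -
  have [measurable]: "p \<in> borel_measurable M" "q \<in> borel_measurable M"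
    using P Q by (simp_all add: is_prob_density_def)
  show ?thesis
  proof (rule measure_dens_meas_eq_integral_if[OF P])
    show "x \<in> {x \<in> space M. info_dens b p q x = ereal (log b \<gamma>)} \<longleftrightarrow> p x = \<gamma> * q x"
      if "x \<in> space M" "0 < p x" for x
      using that b \<gamma> Q by (simp add: info_dens_eq_log_iff is_prob_density_def)
  qed measurable
qed

lemma no_real_atoms_AE_ratio:
  assumes b: "1 < b" and P: "is_prob_density M p" and Q: "is_prob_density M q"
    and atoms: "no_real_atoms b M p q" and \<gamma>: "0 < \<gamma>"
  shows "AE x in M. p x = \<gamma> * q x \<longrightarrow> q x = 0"
proof -
  have [measurable]: "p \<in> borel_measurable M" "q \<in> borel_measurable M"
    and "integrable M p" and p_nonneg: "\<And>x. x \<in> space M \<Longrightarrow> 0 \<le> p x"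
    using P Q by (auto simp: is_prob_density_def)
  then have "integrable M (\<lambda>x. if p x = \<gamma> * q x then p x else 0)"
    by (intro integrable_if_zero) auto
  moreover have "(\<integral>x. (if p x = \<gamma> * q x then p x else 0) \<partial>M) = 0"
    using atoms measure_info_dens_eq_log[OF b \<gamma> P Q] by (simp add: no_real_atoms_def)
  moreover have "AE x in M. 0 \<le> (if p x = \<gamma> * q x then p x else 0)"
    by (intro AE_I2) (use p_nonneg in force)
  ultimately have "AE x in M. (if p x = \<gamma> * q x then p x else 0) = 0"
    by (subst integral_nonneg_eq_0_iff_AE[symmetric])
  then show ?thesis
    by eventually_elim (use \<gamma> in auto)
qed

text \<open>\<open>ratio_tail M p q \<gamma>\<close> is the mass \<open>Q[p > \<gamma> q]\<close>; its negative is the derivative of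
  \<open>E_gamma M p q\<close> at \<open>\<gamma>\<close>.\<close>
definition ratio_tail :: "'a measure \<Rightarrow> ('a \<Rightarrow> real) \<Rightarrow> ('a \<Rightarrow> real) \<Rightarrow> real \<Rightarrow> real" where
  "ratio_tail M p q \<gamma> = (\<integral>x. (if \<gamma> * q x < p x then q x else 0) \<partial>M)"

lemma ratio_tail_nonneg:
  assumes "\<And>x. x \<in> space M \<Longrightarrow> 0 \<le> q x"
  shows "0 \<le> ratio_tail M p q \<gamma>"
  unfolding ratio_tail_def using assms by (intro integral_nonneg_AE) auto

lemma info_cdf_log_eq:
  assumes b: "1 < b" and P: "is_prob_density M p" and Q: "is_prob_density M q" and \<gamma>: "0 < \<gamma>"
  shows "info_cdf b M p q (log b \<gamma>) = 1 - E_gamma M p q \<gamma> - \<gamma> * ratio_tail M p q \<gamma>"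
proof -
  have [measurable]: "p \<in> borel_measurable M" "q \<in> borel_measurable M"
    and p_int: "integrable M p" and q_int: "integrable M q" and p_one: "integral\<^sup>L M p = 1"
    using P Q by (auto simp: is_prob_density_def)
  let ?below = "\<lambda>x. if p x \<le> \<gamma> * q x then p x else 0"
  let ?above = "\<lambda>x. if \<gamma> * q x < p x then p x else 0"
  let ?tail = "\<lambda>x. if \<gamma> * q x < p x then q x else 0"
  have int: "integrable M ?below" "integrable M ?above" "integrable M ?tail"
    using p_int q_int by (auto intro!: integrable_if_zero)
  have "1 = (\<integral>x. ?below x + ?above x \<partial>M)"
    unfolding p_one[symmetric] by (intro Bochner_Integration.integral_cong) auto
  also have "\<dots> = integral\<^sup>L M ?below + integral\<^sup>L M ?above"
    by (rule Bochner_Integration.integral_add[OF int(1,2)])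
  finally have split: "1 = integral\<^sup>L M ?below + integral\<^sup>L M ?above" .
  have "E_gamma M p q \<gamma> = (\<integral>x. ?above x - \<gamma> * ?tail x \<partial>M)"
    unfolding E_gamma_def by (intro Bochner_Integration.integral_cong) auto
  also have "\<dots> = integral\<^sup>L M ?above - \<gamma> * ratio_tail M p q \<gamma>"
    using int by (simp add: ratio_tail_def)
  finally show ?thesis
    using split info_cdf_log_eq_integral[OF b \<gamma> P Q] by simp
qed

lemma info_cdf_neg_log_eq:
  assumes b: "1 < b" and P: "is_prob_density M p" and Q: "is_prob_density M q"
    and atoms: "no_real_atoms b M p q" and \<gamma>: "0 < \<gamma>"
  shows "info_cdf b M p q (- log b \<gamma>) = ratio_tail M q p \<gamma>"
proof -
  have [measurable]: "p \<in> borel_measurable M" "q \<in> borel_measurable M"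
    using P Q by (simp_all add: is_prob_density_def)
  \<comment> \<open>\<open>-log b \<gamma> = log b (inverse \<gamma>)\<close>, and the atom \<open>{q = \<gamma> p}\<close> is \<open>P\<close>-null.\<close>
  have "AE x in M. p x = inverse \<gamma> * q x \<longrightarrow> q x = 0"
    using \<gamma> by (intro no_real_atoms_AE_ratio[OF b P Q atoms]) auto
  then have "AE x in M. (if p x \<le> inverse \<gamma> * q x then p x else 0) = (if \<gamma> * p x < q x then p x else 0)"
    by eventually_elim (use \<gamma> in \<open>auto simp: field_simps\<close>)
  then have "(\<integral>x. (if p x \<le> inverse \<gamma> * q x then p x else 0) \<partial>M) = ratio_tail M q p \<gamma>"
    unfolding ratio_tail_def by (intro integral_cong_AE) auto
  then show ?thesis
    using info_cdf_log_eq_integral[OF b _ P Q, of "inverse \<gamma>"] \<gamma> by (simp add: log_inverse)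
qed

lemma E_gamma_has_real_derivative:
  assumes [measurable]: "p \<in> borel_measurable M" "q \<in> borel_measurable M"
    and p_int: "integrable M p" and q_int: "integrable M q"
    and q_nonneg: "\<And>x. x \<in> space M \<Longrightarrow> 0 \<le> q x"
    and no_atom: "AE x in M. p x = \<gamma> * q x \<longrightarrow> q x = 0"
  shows "(E_gamma M p q has_real_derivative - ratio_tail M p q \<gamma>) (at \<gamma>)"
proof -
  let ?quot = "\<lambda>y x. (max 0 (p x - y * q x) - max 0 (p x - \<gamma> * q x)) / (y - \<gamma>)"
  have int: "integrable M (\<lambda>x. max 0 (p x - y * q x))" for y
  proof (rule Bochner_Integration.integrable_bound)
    show "integrable M (\<lambda>x. \<bar>p x\<bar> + \<bar>y * q x\<bar>)"
      using p_int q_int by auto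
    show "AE x in M. norm (max 0 (p x - y * q x)) \<le> norm (\<bar>p x\<bar> + \<bar>y * q x\<bar>)"
      by (intro AE_I2) (simp add: abs_le_iff)
  qed simp
  have quot: "(E_gamma M p q y - E_gamma M p q \<gamma>) / (y - \<gamma>) = integral\<^sup>L M (?quot y)" for y
    unfolding E_gamma_def using int by simp
  have "- ratio_tail M p q \<gamma> = (\<integral>x. (if \<gamma> * q x < p x then - q x else 0) \<partial>M)"
    unfolding ratio_tail_def by (simp flip: integral_minus add: if_distrib cong: if_cong)
  moreover have "((\<lambda>y. integral\<^sup>L M (?quot y))
      \<longlongrightarrow> (\<integral>x. (if \<gamma> * q x < p x then - q x else 0) \<partial>M)) (at \<gamma>)"
  proof (rule integral_dominated_convergence_at_within[where w=q])
    show "AE x in M. ((\<lambda>y. ?quot y x) \<longlongrightarrow> (if \<gamma> * q x < p x then - q x else 0)) (at \<gamma>)"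
      using no_atom by eventually_elim (intro tendsto_max_zero_diff_quotient, simp)
    show "AE x in M. norm (?quot y x) \<le> q x" if "y \<noteq> \<gamma>" for y
      using that q_nonneg by (auto intro!: max_zero_diff_quotient_bound simp del: abs_divide)
  qed (use q_int in auto)
  ultimately show ?thesis
    unfolding has_field_derivative_iff quot by simp
qed

lemma ratio_tail_tendsto:
  assumes [measurable]: "p \<in> borel_measurable M" "q \<in> borel_measurable M"
    and q_int: "integrable M q" and q_nonneg: "\<And>x. x \<in> space M \<Longrightarrow> 0 \<le> q x"
    and ev: "AE x in M. \<forall>\<^sub>F y in at \<gamma> within S. y * q x < p x \<longleftrightarrow> \<gamma> * q x < p x"
  shows "(ratio_tail M p q \<longlongrightarrow> ratio_tail M p q \<gamma>) (at \<gamma> within S)"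
  unfolding ratio_tail_def
proof (rule integral_dominated_convergence_at_within[where w=q])
  show "AE x in M. ((\<lambda>y. if y * q x < p x then q x else 0)
      \<longlongrightarrow> (if \<gamma> * q x < p x then q x else 0)) (at \<gamma> within S)"
    using ev
  proof eventually_elim
    case (elim x)
    then have "\<forall>\<^sub>F y in at \<gamma> within S.
        (if y * q x < p x then q x else 0) = (if \<gamma> * q x < p x then q x else 0)"
      by eventually_elim simp
    then show ?case
      by (rule tendsto_eventually)
  qed
qed (use q_int q_nonneg in auto)

lemma ratio_tail_isCont:
  assumes "p \<in> borel_measurable M" "q \<in> borel_measurable M"
    and "integrable M q" "\<And>x. x \<in> space M \<Longrightarrow> 0 \<le> q x"
    and no_atom: "AE x in M. p x = \<gamma> * q x \<longrightarrow> q x = 0"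
  shows "isCont (ratio_tail M p q) \<gamma>"
  unfolding isCont_def
proof (rule ratio_tail_tendsto[OF assms(1-4)])
  show "AE x in M. \<forall>\<^sub>F y in at \<gamma>. y * q x < p x \<longleftrightarrow> \<gamma> * q x < p x"
    using no_atom by eventually_elim (intro eventually_at_mult_less_iff, simp)
qed

lemma ratio_tail_right_continuous:
  assumes "p \<in> borel_measurable M" "q \<in> borel_measurable M"
    and "integrable M q" "\<And>x. x \<in> space M \<Longrightarrow> 0 \<le> q x"
  shows "(ratio_tail M p q \<longlongrightarrow> ratio_tail M p q \<gamma>) (at_right \<gamma>)"
  using assms by (intro ratio_tail_tendsto AE_I2 eventually_at_right_mult_less_iff)

lemma no_real_atoms_E_gamma_has_real_derivative:
  assumes b: "1 < b" and P: "is_prob_density M p" and Q: "is_prob_density M q"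
    and atoms: "no_real_atoms b M p q" and \<gamma>: "0 < \<gamma>"
  shows "(E_gamma M p q has_real_derivative - ratio_tail M p q \<gamma>) (at \<gamma>)"
    and "(E_gamma M q p has_real_derivative - ratio_tail M q p \<gamma>) (at \<gamma>)"
proof -
  have "AE x in M. p x = inverse \<gamma> * q x \<longrightarrow> q x = 0"
    using \<gamma> by (intro no_real_atoms_AE_ratio[OF b P Q atoms]) auto
  then have "AE x in M. q x = \<gamma> * p x \<longrightarrow> p x = 0"
    by eventually_elim (use \<gamma> in auto)
  then show "(E_gamma M q p has_real_derivative - ratio_tail M q p \<gamma>) (at \<gamma>)"
    using P Q by (intro E_gamma_has_real_derivative) (auto simp: is_prob_density_def)
  show "(E_gamma M p q has_real_derivative - ratio_tail M p q \<gamma>) (at \<gamma>)"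
    using P Q no_real_atoms_AE_ratio[OF b P Q atoms \<gamma>]
    by (intro E_gamma_has_real_derivative) (auto simp: is_prob_density_def)
qed

lemma info_cdf_nonneg_eq_if_E_gamma_eq:
  assumes b: "1 < b"
    and P: "is_prob_density M p" and Q: "is_prob_density M q" and atoms: "no_real_atoms b M p q"
    and P': "is_prob_density M' p'" and Q': "is_prob_density M' q'" and atoms': "no_real_atoms b M' p' q'"
    and E: "\<And>\<gamma>. 1 \<le> \<gamma> \<Longrightarrow> E_gamma M' p' q' \<gamma> = E_gamma M p q \<gamma>"
    and t: "0 \<le> t"
  shows "info_cdf b M' p' q' t = info_cdf b M p q t"
proof -
  have tail: "ratio_tail M' p' q' \<gamma> = ratio_tail M p q \<gamma>" if "1 < \<gamma>" for \<gamma>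
  proof -
    have "- ratio_tail M' p' q' \<gamma> = - ratio_tail M p q \<gamma>"
    proof (rule DERIV_unique_on_open[where S="{1<..}"])
      show "(E_gamma M' p' q' has_real_derivative - ratio_tail M' p' q' \<gamma>) (at \<gamma>)"
        using that by (intro no_real_atoms_E_gamma_has_real_derivative(1)[OF b P' Q' atoms']) simp
      show "(E_gamma M p q has_real_derivative - ratio_tail M p q \<gamma>) (at \<gamma>)"
        using that by (intro no_real_atoms_E_gamma_has_real_derivative(1)[OF b P Q atoms]) simp
    qed (use that E in auto)
    then show ?thesis
      by simp
  qed
  \<comment> \<open>\<open>E_gamma\<close> need not be differentiable at \<open>1\<close>; right-continuity of the tail covers it.\<close>
  moreover have "ratio_tail M' p' q' 1 = ratio_tail M p q 1"
  proof (rule right_continuous_eq[of "ratio_tail M' p' q'" 1 "ratio_tail M p q"])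
    show "(ratio_tail M' p' q' \<longlongrightarrow> ratio_tail M' p' q' 1) (at_right 1)"
      using P' Q' by (intro ratio_tail_right_continuous) (auto simp: is_prob_density_def)
    show "(ratio_tail M p q \<longlongrightarrow> ratio_tail M p q 1) (at_right 1)"
      using P Q by (intro ratio_tail_right_continuous) (auto simp: is_prob_density_def)
  qed (rule tail)
  ultimately have tail_ge_1: "ratio_tail M' p' q' \<gamma> = ratio_tail M p q \<gamma>" if "1 \<le> \<gamma>" for \<gamma>
    using that by (cases "\<gamma> = 1") auto
  define \<gamma> where "\<gamma> = b powr t"
  have \<gamma>: "1 \<le> \<gamma>" "t = log b \<gamma>"
    using b t by (simp_all add: \<gamma>_def ge_one_powr_ge_zero)
  show ?thesis
    using info_cdf_log_eq[OF b P Q, of \<gamma>] info_cdf_log_eq[OF b P' Q', of \<gamma>] \<gamma> E[OF \<gamma>(1)] tail_ge_1[OF \<gamma>(1)]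
    by simp
qed

lemma info_cdf_neg_eq_if_E_gamma_eq:
  assumes b: "1 < b"
    and P: "is_prob_density M p" and Q: "is_prob_density M q" and atoms: "no_real_atoms b M p q"
    and P': "is_prob_density M' p'" and Q': "is_prob_density M' q'" and atoms': "no_real_atoms b M' p' q'"
    and E: "\<And>\<gamma>. 1 < \<gamma> \<Longrightarrow> E_gamma M' q' p' \<gamma> = E_gamma M q p \<gamma>"
    and t: "t < 0"
  shows "info_cdf b M' p' q' t = info_cdf b M p q t"
proof -
  define \<gamma> where "\<gamma> = b powr (- t)"
  have \<gamma>: "1 < \<gamma>" "t = - log b \<gamma>"
    using b t by (simp_all add: \<gamma>_def)
  have "- ratio_tail M' q' p' \<gamma> = - ratio_tail M q p \<gamma>"
  proof (rule DERIV_unique_on_open[where S="{1<..}"])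
    show "(E_gamma M' q' p' has_real_derivative - ratio_tail M' q' p' \<gamma>) (at \<gamma>)"
      using \<gamma> by (intro no_real_atoms_E_gamma_has_real_derivative(2)[OF b P' Q' atoms']) simp
    show "(E_gamma M q p has_real_derivative - ratio_tail M q p \<gamma>) (at \<gamma>)"
      using \<gamma> by (intro no_real_atoms_E_gamma_has_real_derivative(2)[OF b P Q atoms]) simp
  qed (use \<gamma> E in auto)
  then show ?thesis
    using \<gamma> info_cdf_neg_log_eq[OF b P Q atoms] info_cdf_neg_log_eq[OF b P' Q' atoms'] by simp
qed

theorem theorem3:
  fixes M :: "'a measure" and p q :: "'a \<Rightarrow> real" and b :: real
  assumes b: "1 < b"
    and P: "is_prob_density M p" and Q: "is_prob_density M q"
    and atoms: "no_real_atoms b M p q"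
  shows "(\<exists>D DQ.
      \<comment> \<open>(a)\<close>
      (\<forall>\<gamma>>1. (E_gamma M p q has_real_derivative D \<gamma>) (at \<gamma>))
    \<and> continuous_on {1<..} D
    \<and> (\<forall>\<gamma>>1. D \<gamma> \<le> 0)
    \<and> (\<forall>\<gamma>>1. (E_gamma M q p has_real_derivative DQ \<gamma>) (at \<gamma>))
      \<comment> \<open>(b)\<close>
    \<and> (\<forall>\<gamma>>1. info_cdf b M p q (log b \<gamma>) = 1 - E_gamma M p q \<gamma> + \<gamma> * D \<gamma>)
    \<and> (\<forall>\<gamma>>1. info_cdf b M p q (- log b \<gamma>) = - DQ \<gamma>)
    \<and> (D \<longlongrightarrow> info_cdf b M p q 0 - 1 + E_gamma M p q 1) (at_right 1)
    \<and> (DQ \<longlongrightarrow> - info_cdf b M p q 0) (at_right 1))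
    \<comment> \<open>(c)\<close>
    \<and> (\<forall>(M' :: 'b measure) p' q'.
      is_prob_density M' p' \<and> is_prob_density M' q' \<and> no_real_atoms b M' p' q' \<longrightarrow>
      ((\<forall>\<gamma>\<ge>1. E_gamma M' p' q' \<gamma> = E_gamma M p q \<gamma>) \<longrightarrow>
         (\<forall>t\<ge>0. info_cdf b M' p' q' t = info_cdf b M p q t))
    \<and> ((\<forall>\<gamma>>1. E_gamma M' q' p' \<gamma> = E_gamma M q p \<gamma>) \<longrightarrow>
         (\<forall>t<0. info_cdf b M' p' q' t = info_cdf b M p q t)))"
proof -
  have [measurable]: "p \<in> borel_measurable M" "q \<in> borel_measurable M"
    and p_int: "integrable M p" and q_int: "integrable M q"
    and p_nonneg: "\<And>x. x \<in> space M \<Longrightarrow> 0 \<le> p x" and q_nonneg: "\<And>x. x \<in> space M \<Longrightarrow> 0 \<le> q x"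
    using P Q by (auto simp: is_prob_density_def)
  have "isCont (\<lambda>\<gamma>. - ratio_tail M p q \<gamma>) \<gamma>" if "1 < \<gamma>" for \<gamma>
    using that q_int q_nonneg no_real_atoms_AE_ratio[OF b P Q atoms, of \<gamma>]
    by (intro continuous_minus ratio_tail_isCont) auto
  then have cont: "continuous_on {1<..} (\<lambda>\<gamma>. - ratio_tail M p q \<gamma>)"
    by (intro continuous_at_imp_continuous_on) auto
  have lim: "((\<lambda>\<gamma>. - ratio_tail M p q \<gamma>) \<longlongrightarrow> info_cdf b M p q 0 - 1 + E_gamma M p q 1) (at_right 1)"
    using tendsto_minus[OF ratio_tail_right_continuous[of p M q 1]] info_cdf_log_eq[OF b P Q, of 1]
      q_int q_nonneg by simp
  have lim_swapped: "((\<lambda>\<gamma>. - ratio_tail M q p \<gamma>) \<longlongrightarrow> - info_cdf b M p q 0) (at_right 1)"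
    using tendsto_minus[OF ratio_tail_right_continuous[of q M p 1]] info_cdf_neg_log_eq[OF b P Q atoms, of 1]
      p_int p_nonneg by simp
  show ?thesis
    by (rule conjI, rule exI[of _ "\<lambda>\<gamma>. - ratio_tail M p q \<gamma>"], rule exI[of _ "\<lambda>\<gamma>. - ratio_tail M q p \<gamma>"])
      (use cont lim lim_swapped no_real_atoms_E_gamma_has_real_derivative[OF b P Q atoms]
        ratio_tail_nonneg[of M q p] q_nonneg info_cdf_log_eq[OF b P Q] info_cdf_neg_log_eq[OF b P Q atoms] in
        \<open>auto intro: info_cdf_nonneg_eq_if_E_gamma_eq[OF b P Q atoms] info_cdf_neg_eq_if_E_gamma_eq[OF b P Q atoms]\<close>)
qed

end
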